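(* Let $n$ be even, let $V$ be an $n$-dimensional $\mathbb{F}_2$-vector space, and let $h:V\to\mathbb{F}_2$ be a Maiorana–McFarland bent function which has a unique $\mathcal{M}$-subspace $\mathcal{W}$ of dimension $n/2$ such that every nontrivial $\mathcal{M}$-subspace $\mathcal{U}$ of $h$ satisfies $\mathcal{U}\subseteq\mathcal{W}$. Let $\widetilde{\mathcal{W}}$ be a subspace with $\mathcal{W}\cap\widetilde{\mathcal{W}}=\{0\}$ and $\mathcal{W}+\widetilde{\mathcal{W}}=V$, and let $L$ be a linear permutation of $V$ with $L(\widetilde{\mathcal{W}})=\mathcal{W}$. Let $k$ be a positive integer, $V_0=\{z\in\mathbb{F}_{2^k}:{\rm Tr}_1^k(z)=0\}$, and for $z\in\mathbb{F}_{2^k}$ put $f^{(z)}=h$ if $z\in V_0$ and $f^{(z)}=h\circ L$ if $z\notin V_0$. If $n>2k+4$, then the function $f:V\times\mathbb{F}_{2^k}\times\mathbb{F}_{2^k}\to\mathbb{F}_2$, $f(x,y,z)=f^{(z)}(x)+{\rm Tr}_1^k(yz)$, is not (EA-equivalent to) a Maiorana–McFarland function, i.e. $f\notin MM^{\#}$; equivalently, every $\mathcal{M}$-subspace $\mathcal{U}$ of $f$ satisfies $\dim\mathcal{U}<n/2+k$.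
   Context: ${\rm Tr}_1^k$ is the absolute trace of $\mathbb{F}_{2^k}$. For a Boolean function $g$ on an $\mathbb{F}_2$-space $X$, $D_aD_bg(x)=g(x)+g(x+a)+g(x+b)+g(x+a+b)$. A subspace $\mathcal{U}\subseteq X$ is an $\mathcal{M}$-subspace of $g$ if $D_aD_bg(x)=0$ for all $a,b\in\mathcal{U}$ and all $x\in X$; it is nontrivial if its dimension is at least $2$. A Boolean function $g$ on $X$ is bent if all its Walsh values $\sum_x(-1)^{g(x)+\langle b,x\rangle}$ have absolute value $2^{\dim X/2}$. Two Boolean functions $f,g$ on $X$ are EA-equivalent if $g(x)=f(L'(x)+a)+\langle c,x\rangle+b$ with $L'$ a linear permutation of $X$, $a,c\in X$, $b\in\mathbb{F}_2$. The Maiorana–McFarland class on $\mathbb{F}_{2^N}\times\mathbb{F}_{2^N}$ consists of functions ${\rm Tr}_1^N(x\pi(y))+g(y)$ with $\pi$ a permutation of $\mathbb{F}_{2^N}$; $MM^{\#}$ is the set of Boolean functions on a $2N$-dimensional $\mathbb{F}_2$-space EA-equivalent (after a linear identification of the space with $\mathbb{F}_{2^N}^2$) to such a function. A bent function on a $2N$-dimensional space is a Maiorana–McFarland bent function (lies in $MM^{\#}$) iff it has an $\mathcal{M}$-subspace of dimension $N$. *)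

theory Defs
  imports Main "HOL-Library.Z2" "HOL-Library.Product_Plus"
begin

text \<open>F_2-vector spaces are modelled as (finite) abelian groups in which every element
  has order dividing 2 (x + x = 0); F_2-scalar multiplication is then forced
  (0 x = 0, 1 x = x), so F_2-subspaces are exactly the additive subgroups and F_2-linear
  maps are exactly the additive maps.\<close>

definition f2_subspace :: "'a::ab_group_add set \<Rightarrow> bool" where
  "f2_subspace U \<longleftrightarrow> 0 \<in> U \<and> (\<forall>a\<in>U. \<forall>b\<in>U. a + b \<in> U)"

definition f2_dim :: "'a::ab_group_add set \<Rightarrow> nat" where
  "f2_dim U = (THE d. card U = 2 ^ d)"

definition f2_linear :: "('a::ab_group_add \<Rightarrow> 'b::ab_group_add) \<Rightarrow> bool" where
  "f2_linear L \<longleftrightarrow> (\<forall>x y. L (x + y) = L x + L y)"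

definition DD :: "('a::ab_group_add \<Rightarrow> bit) \<Rightarrow> 'a \<Rightarrow> 'a \<Rightarrow> 'a \<Rightarrow> bit" where
  "DD g a b x = g x + g (x + a) + g (x + b) + g (x + a + b)"

definition M_subspace :: "('a::ab_group_add \<Rightarrow> bit) \<Rightarrow> 'a set \<Rightarrow> bool" where
  "M_subspace g U \<longleftrightarrow> f2_subspace U \<and> (\<forall>a\<in>U. \<forall>b\<in>U. \<forall>x. DD g a b x = 0)"

definition nontrivial_M_subspace :: "('a::ab_group_add \<Rightarrow> bit) \<Rightarrow> 'a set \<Rightarrow> bool" where
  "nontrivial_M_subspace g U \<longleftrightarrow> M_subspace g U \<and> f2_dim U \<ge> 2"

definition sgn_bit :: "bit \<Rightarrow> int" where
  "sgn_bit c = (if c = 0 then 1 else -1)"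

text \<open>Walsh value at the linear functional l (the functionals x \<mapsto> <b,x> are exactly
  the F_2-linear maps V \<rightarrow> F_2).\<close>
definition walsh :: "('a::{ab_group_add,finite} \<Rightarrow> bit) \<Rightarrow> ('a \<Rightarrow> bit) \<Rightarrow> int" where
  "walsh g l = (\<Sum>x\<in>UNIV. sgn_bit (g x + l x))"

definition bent :: "nat \<Rightarrow> ('a::{ab_group_add,finite} \<Rightarrow> bit) \<Rightarrow> bool" where
  "bent n g \<longleftrightarrow> (\<forall>l::'a \<Rightarrow> bit. f2_linear l \<longrightarrow> \<bar>walsh g l\<bar> = 2 ^ (n div 2))"

definition trace :: "nat \<Rightarrow> 'f::field \<Rightarrow> 'f" where
  "trace k z = (\<Sum>i<k. z ^ (2 ^ i))"

definition tr_bit :: "nat \<Rightarrow> 'f::field \<Rightarrow> bit" where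
  "tr_bit k z = (if trace k z = 0 then 0 else 1)"

end

theory Submission
  imports Defs "HOL-Number_Theory.Residues" "HOL-Computational_Algebra.Polynomial"
begin

text \<open>Let \<open>U\<close> be an \<open>\<M>\<close>-subspace of \<open>f\<close> and \<open>P = {x. (x, 0, 0) \<in> U}\<close>; then
  \<open>dim U \<le> dim P + 2k\<close>. Freezing the last coordinate at \<open>z = 0\<close> and at some \<open>z\<^sub>0\<close> of nonzero
  trace shows that \<open>P\<close> and \<open>L(P)\<close> are \<open>\<M>\<close>-subspaces of \<open>h\<close>. If \<open>P\<close> were nontrivial, both would
  lie in \<open>\<W>\<close>, so \<open>P \<subseteq> \<W> \<inter> \<W>' = {0}\<close>. Hence \<open>dim U < 2k + 2 \<le> n/2 + k\<close>.\<close>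

lemma f2_subspace_insert:
  fixes U :: "'a::ab_group_add set"
  assumes char2: "\<forall>x::'a. x + x = 0" and U: "f2_subspace U"
  shows "f2_subspace (U \<union> (+) a ` U)"
proof -
  have cancel: "a + (a + z) = z" for z
    using char2 by (metis add.assoc add_0)
  have mem: "z \<in> U \<union> (+) a ` U \<longleftrightarrow> z \<in> U \<or> a + z \<in> U" for z
    using cancel by (metis Un_iff image_iff)
  have closed: "u + v \<in> U" if "u \<in> U" "v \<in> U" for u v
    using U that unfolding f2_subspace_def by blast
  have "x + y \<in> U \<or> a + (x + y) \<in> U" if "x \<in> U \<or> a + x \<in> U" "y \<in> U \<or> a + y \<in> U" for x y
  proof -
    have "(a + x) + (a + y) = (a + a) + (x + y)" by (simp add: add_ac)
    then have "x + y = (a + x) + (a + y)" using char2 by simp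
    moreover have "a + (x + y) = x + (a + y)" "a + (x + y) = (a + x) + y"
      by (simp_all add: add_ac)
    ultimately show ?thesis using that closed by metis
  qed
  then show ?thesis using U mem unfolding f2_subspace_def by auto
qed

lemma card_f2_subspace_insert:
  fixes U :: "'a::{ab_group_add,finite} set"
  assumes char2: "\<forall>x::'a. x + x = 0" and U: "f2_subspace U" and a: "a \<notin> U"
  shows "card (U \<union> (+) a ` U) = 2 * card U"
proof -
  have "U \<inter> (+) a ` U = {}"
  proof (rule ccontr)
    assume "U \<inter> (+) a ` U \<noteq> {}"
    then obtain u v where "u \<in> U" "v \<in> U" "u = a + v" by blast
    then have "u + v = a + (v + v)" by (simp add: add.assoc)
    then have "u + v = a" using char2 by simp
    then show False using a U \<open>u \<in> U\<close> \<open>v \<in> U\<close> unfolding f2_subspace_def by blast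
  qed
  moreover have "card ((+) a ` U) = card U" by (simp add: card_image)
  ultimately show ?thesis by (simp add: card_Un_disjoint)
qed

lemma f2_subspace_card_power_of_two:
  fixes U :: "'a::{ab_group_add,finite} set"
  assumes char2: "\<forall>x::'a. x + x = 0" and U: "f2_subspace U"
  shows "\<exists>d. card U = 2 ^ d"
proof -
  have "\<exists>U'. f2_subspace U' \<and> S \<subseteq> U' \<and> U' \<subseteq> U \<and> (\<exists>d. card U' = 2 ^ d)"
    if "S \<subseteq> U" for S
    using finite[of S] that
  proof (induction S rule: finite_induct)
    case empty
    show ?case
      by (rule exI[of _ "{0}"]) (use U in \<open>auto simp: f2_subspace_def intro: exI[of _ 0]\<close>)
  next
    case (insert a S)
    then obtain U' d where U': "f2_subspace U'" "S \<subseteq> U'" "U' \<subseteq> U" "card U' = 2 ^ d"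
      by auto
    show ?case
    proof (cases "a \<in> U'")
      case True
      then show ?thesis using U' by blast
    next
      case False
      have "a \<in> (+) a ` U'" using U' unfolding f2_subspace_def by force
      moreover have "(+) a ` U' \<subseteq> U"
        using U U' insert.prems unfolding f2_subspace_def by blast
      moreover have "card (U' \<union> (+) a ` U') = 2 ^ Suc d"
        using card_f2_subspace_insert[OF char2 U'(1) False] U'(4) by simp
      ultimately show ?thesis
        using f2_subspace_insert[OF char2 U'(1)] U' by blast
    qed
  qed
  from this[OF order.refl] show ?thesis by (metis subset_antisym)
qed

lemma f2_dim_eqI: "card U = 2 ^ d \<Longrightarrow> f2_dim U = d"
  unfolding f2_dim_def by (rule the_equality) auto

lemma f2_dim_image:
  assumes "inj L"
  shows "f2_dim (L ` U) = f2_dim U"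
  unfolding f2_dim_def using assms by (simp add: card_image inj_on_subset)

lemma f2_subspace_zero_fibre:
  assumes "f2_subspace U"
  shows "f2_subspace {a. (a, 0) \<in> U}"
proof -
  have "(0, 0) \<in> U" using assms unfolding f2_subspace_def zero_prod_def by blast
  moreover have "(a + b, 0) \<in> U" if "(a, 0) \<in> U" "(b, 0) \<in> U" for a b
  proof -
    have "(a, 0) + (b, 0) \<in> U" using assms that unfolding f2_subspace_def by blast
    then show ?thesis by simp
  qed
  ultimately show ?thesis unfolding f2_subspace_def by blast
qed

lemma card_f2_subspace_le_zero_fibre:
  fixes U :: "('a::{ab_group_add,finite} \<times> 'b::{ab_group_add,finite}) set"
  assumes char2: "\<forall>u::'a \<times> 'b. u + u = 0" and U: "f2_subspace U"
  shows "card U \<le> card {a. (a, 0) \<in> U} * card (UNIV :: 'b set)"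
proof -
  define P where "P = {a. (a, 0) \<in> U}"
  have fibre: "card {u \<in> U. snd u = b} \<le> card P" for b
  proof (cases "\<exists>u\<^sub>0 \<in> U. snd u\<^sub>0 = b")
    case True
    then obtain u\<^sub>0 where u\<^sub>0: "u\<^sub>0 \<in> U" "snd u\<^sub>0 = b" by blast
    have "{u \<in> U. snd u = b} \<subseteq> (\<lambda>p. u\<^sub>0 + (p, 0)) ` P"
    proof
      fix u assume u: "u \<in> {u \<in> U. snd u = b}"
      have "snd (u\<^sub>0 + u) = 0" using u u\<^sub>0 char2 by (simp add: prod_eq_iff)
      then have "u\<^sub>0 + u = (fst (u\<^sub>0 + u), 0)" by (metis prod.collapse)
      moreover have "u\<^sub>0 + u \<in> U" using u u\<^sub>0 U unfolding f2_subspace_def by blast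
      moreover have "u = u\<^sub>0 + (u\<^sub>0 + u)" by (metis add.assoc add_0 char2)
      ultimately show "u \<in> (\<lambda>p. u\<^sub>0 + (p, 0)) ` P" unfolding P_def by (metis image_eqI mem_Collect_eq)
    qed
    then show ?thesis by (meson card_image_le card_mono finite order.trans)
  next
    case False
    then have "{u \<in> U. snd u = b} = {}" by blast
    then show ?thesis by (metis card.empty le0)
  qed
  have "U = (\<Union>b. {u \<in> U. snd u = b})" by blast
  then have "card U \<le> (\<Sum>b\<in>UNIV. card {u \<in> U. snd u = b})"
    by (metis card_UN_le finite)
  also have "\<dots> \<le> (\<Sum>b\<in>(UNIV :: 'b set). card P)" by (intro sum_mono fibre)
  finally show ?thesis unfolding P_def by (simp add: mult.commute)
qed

lemma f2_dim_le_zero_fibre: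
  fixes U :: "('a::{ab_group_add,finite} \<times> 'b::{ab_group_add,finite}) set"
  assumes char2: "\<forall>u::'a \<times> 'b. u + u = 0" and U: "f2_subspace U"
    and card_b: "card (UNIV :: 'b set) = 2 ^ m"
  shows "f2_dim U \<le> f2_dim {a. (a, 0) \<in> U} + m"
proof -
  have char2_a: "\<forall>x::'a. x + x = 0" using char2 by (metis add_Pair prod.inject zero_prod_def)
  obtain d where d: "card U = 2 ^ d" using f2_subspace_card_power_of_two[OF char2 U] by blast
  obtain e where e: "card {a. (a, 0) \<in> U} = 2 ^ e"
    using f2_subspace_card_power_of_two[OF char2_a f2_subspace_zero_fibre[OF U]] by blast
  have "(2::nat) ^ d \<le> 2 ^ (e + m)"
    using card_f2_subspace_le_zero_fibre[OF char2 U] d e card_b by (simp add: power_add)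
  then show ?thesis using f2_dim_eqI[OF d] f2_dim_eqI[OF e] by simp
qed

lemma M_subspace_zero_fibre:
  assumes "M_subspace g U"
  shows "M_subspace (\<lambda>x. g (x, c)) {a. (a, 0) \<in> U}"
proof -
  have "DD (\<lambda>x. g (x, c)) a b x = DD g (a, 0) (b, 0) (x, c)" for a b x
    by (simp only: DD_def add_Pair add_0_right)
  then show ?thesis
    using assms f2_subspace_zero_fibre unfolding M_subspace_def by (metis mem_Collect_eq)
qed

lemma M_subspace_linear_image:
  assumes L: "f2_linear L" "surj L" and P: "M_subspace (\<lambda>x. h (L x)) P"
  shows "M_subspace h (L ` P)"
proof -
  have L_add: "L (x + y) = L x + L y" for x y using L(1) unfolding f2_linear_def by blast
  have "f2_subspace (L ` P)"
    unfolding f2_subspace_def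
  proof (intro conjI ballI)
    have "L 0 = 0" using L_add[of 0 0] by simp
    then show "0 \<in> L ` P" using P unfolding M_subspace_def f2_subspace_def by force
  next
    fix a' b' assume "a' \<in> L ` P" "b' \<in> L ` P"
    then obtain a b where "a \<in> P" "b \<in> P" "a' = L a" "b' = L b" by blast
    then show "a' + b' \<in> L ` P"
      using P L_add unfolding M_subspace_def f2_subspace_def by (metis imageI)
  qed
  moreover have "DD h a' b' y = 0" if a'b': "a' \<in> L ` P" "b' \<in> L ` P" for a' b' y
  proof -
    obtain a b where ab: "a \<in> P" "b \<in> P" "a' = L a" "b' = L b" using a'b' by blast
    obtain x where x: "y = L x" using L(2) by (metis surjD)
    have "DD (\<lambda>x. h (L x)) a b x = 0" using P ab unfolding M_subspace_def by blast
    then show ?thesis unfolding ab x by (simp only: DD_def L_add)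
  qed
  ultimately show ?thesis unfolding M_subspace_def by blast
qed

lemma M_subspace_with_complementary_image_trivial:
  assumes W_max: "\<forall>U. nontrivial_M_subspace h U \<longrightarrow> U \<subseteq> W"
    and W_int: "W \<inter> W' = {0}" and L_W: "L ` W' = W" and L_inj: "inj L"
    and P: "M_subspace h P" and LP: "M_subspace h (L ` P)"
  shows "f2_dim P < 2"
proof (rule ccontr)
  assume "\<not> f2_dim P < 2"
  then have "P \<subseteq> W" "L ` P \<subseteq> L ` W'"
    using W_max P LP f2_dim_image[OF L_inj] L_W unfolding nontrivial_M_subspace_def by auto
  then have "P \<subseteq> {0}" using W_int L_inj by (auto simp: inj_image_subset_iff)
  moreover have "0 \<in> P" using P unfolding M_subspace_def f2_subspace_def by blast
  ultimately have "P = {0}" by blast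
  then have "f2_dim P = 0" using f2_dim_eqI[of P 0] by simp
  with \<open>\<not> f2_dim P < 2\<close> show False by simp
qed

lemma finite_field_char_two:
  assumes "card (UNIV :: 'f::{field,finite} set) = 2 ^ k" "k > 0"
  shows "\<forall>x::'f. x + x = 0"
proof -
  have "prime CHAR('f)"
    by (rule prime_CHAR_semidom) (simp add: finite_imp_CHAR_pos)
  moreover have "CHAR('f) dvd 2 ^ k" using CHAR_dvd_CARD[where ?'a='f] assms by simp
  ultimately have "CHAR('f) = 2" by (metis prime_dvd_power primes_dvd_imp_eq two_is_prime_nat)
  then have "(1 + 1 :: 'f) = 0" by (metis of_nat_CHAR one_add_one of_nat_numeral)
  then show ?thesis by (metis distrib_right mult_1 mult_zero_left)
qed

lemma trace_zero [simp]: "trace k 0 = 0"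
  unfolding trace_def by (simp add: power_0_left)

lemma tr_bit_zero [simp]: "tr_bit k 0 = 0"
  unfolding tr_bit_def by simp

text \<open>The trace is a polynomial of degree \<open>2\<^sup>k\<^sup>-\<^sup>1\<close>, so it cannot vanish at all \<open>2\<^sup>k\<close> points.\<close>

lemma ex_trace_nonzero:
  assumes "card (UNIV :: 'f::{field,finite} set) = 2 ^ k" "k > 0"
  shows "\<exists>z::'f. trace k z \<noteq> 0"
proof (rule ccontr)
  assume no_root: "\<not> ?thesis"
  define p :: "'f poly" where "p = (\<Sum>i<k. monom 1 (2 ^ i))"
  have "coeff p (2 ^ (k - 1)) = (\<Sum>i<k. if 2 ^ (k - 1) = (2::nat) ^ i then 1 else 0)"
    unfolding p_def by (simp add: coeff_sum)
  also have "\<dots> = (\<Sum>i\<in>{k - 1}. 1)"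
    using assms(2) by (intro sum.mono_neutral_cong_right) auto
  finally have "p \<noteq> 0" by auto
  have "{x. poly p x = 0} = UNIV"
    using no_root unfolding p_def trace_def by (simp add: poly_sum poly_monom)
  then have "card (UNIV :: 'f set) \<le> degree p"
    using card_poly_roots_bound[OF \<open>p \<noteq> 0\<close>] by simp
  also have "degree p \<le> 2 ^ (k - 1)"
    unfolding p_def by (rule degree_sum_le) (auto intro: order.trans[OF degree_monom_le])
  also have "\<dots> < 2 ^ k" using assms(2) by simp
  finally show False using assms(1) by simp
qed

theorem proposition3p4:
  fixes n k :: nat
    and h :: "'v::{ab_group_add,finite} \<Rightarrow> bit"
    and W W' :: "'v set"
    and L :: "'v \<Rightarrow> 'v"
  assumes char2_V: "\<forall>x::'v. x + x = 0"
    and dimV: "card (UNIV :: 'v set) = 2 ^ n"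
    and n_even: "even n"
    and h_bent: "bent n h"
    and W_M: "M_subspace h W" and W_dim: "f2_dim W = n div 2"
    and W_unique: "\<forall>W''. M_subspace h W'' \<and> f2_dim W'' = n div 2 \<longrightarrow> W'' = W"
    and W_max: "\<forall>U. nontrivial_M_subspace h U \<longrightarrow> U \<subseteq> W"
    and W'_sub: "f2_subspace W'"
    and W_int: "W \<inter> W' = {0}"
    and W_sum: "{a + b | a b. a \<in> W \<and> b \<in> W'} = UNIV"
    and L_lin: "f2_linear L" and L_bij: "bij L"
    and L_W: "L ` W' = W"
    and k_pos: "k > 0"
    and card_F: "card (UNIV :: 'f::{field,finite} set) = 2 ^ k"
    and n_big: "n > 2 * k + 4"
  shows "\<forall>U. M_subspace
            (\<lambda>(x, y, z :: 'f). (if trace k z = 0 then h x else h (L x)) + tr_bit k (y * z))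
            U \<longrightarrow> f2_dim U < n div 2 + k"
proof (intro allI impI)
  fix U
  assume U_M: "M_subspace
            (\<lambda>(x, y, z :: 'f). (if trace k z = 0 then h x else h (L x)) + tr_bit k (y * z)) U"
    (is "M_subspace ?f U")
  define P where "P = {x. (x, 0 :: 'f \<times> 'f) \<in> U}"
  have char2: "\<forall>u :: 'v \<times> 'f \<times> 'f. u + u = 0"
    using char2_V finite_field_char_two[OF card_F k_pos] by (auto simp: prod_eq_iff)
  have card_FF: "card (UNIV :: ('f \<times> 'f) set) = 2 ^ (2 * k)"
    using card_F
    by (simp add: UNIV_Times_UNIV[symmetric] card_cartesian_product mult_2 power_add del: UNIV_Times_UNIV)
  have dim_U: "f2_dim U \<le> f2_dim P + 2 * k"
    using f2_dim_le_zero_fibre[OF char2 _ card_FF] U_M unfolding M_subspace_def P_def by blast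
  obtain z\<^sub>0 :: 'f where "trace k z\<^sub>0 \<noteq> 0" using ex_trace_nonzero[OF card_F k_pos] by blast
  \<comment> \<open>By default the simplifier turns addition in \<open>bit\<close> into \<open>xor\<close>, which hides \<open>b + 0 = b\<close>.\<close>
  then have slice_z\<^sub>0: "(\<lambda>x. ?f (x, 0, z\<^sub>0)) = (\<lambda>x. h (L x))" by (simp del: add_bit_eq_xor)
  have slice_0: "(\<lambda>x. ?f (x, 0, 0)) = h" by (simp del: add_bit_eq_xor)
  have "M_subspace h P"
    using M_subspace_zero_fibre[OF U_M, of "(0, 0)"] unfolding slice_0 P_def .
  moreover have "M_subspace h (L ` P)"
    using M_subspace_zero_fibre[OF U_M, of "(0, z\<^sub>0)"] unfolding slice_z\<^sub>0 P_def
    by (rule M_subspace_linear_image[OF L_lin bij_is_surj[OF L_bij]])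
  ultimately have "f2_dim P < 2"
    by (rule M_subspace_with_complementary_image_trivial[OF W_max W_int L_W bij_is_inj[OF L_bij]])
  then show "f2_dim U < n div 2 + k" using dim_U n_big n_even by linarith
qed

end
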